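(* Let $S$ and $Z$ be finite nonempty alphabets with $\#Z\le\#S$, let $\tau:S\to Z$ be surjective, and let $(\Sigma,\sigma_\tau)$ be the associated full zip shift space. Then $\sigma_\tau$ is an expansive local homeomorphism.
   Context: The zip shift space is $\Sigma=\Sigma_{Z,S}$, the set of bi-infinite sequences $x=(x_i)_{i\in\mathbb{Z}}$ with $x_i\in S$ for $i\ge 0$ and $x_i\in Z$ for $i<0$, with metric $d(x,y)=2^{-M(x,y)}$, $M(x,y)=\min\{|i|: x_i\ne y_i\}$. The zip shift map $\sigma_\tau:\Sigma\to\Sigma$ is given by $(\sigma_\tau x)_i=x_{i+1}$ for $i\ne -1$ and $(\sigma_\tau x)_{-1}=\tau(x_0)$. A continuous map (local homeomorphism) $f:X\to X$ of a compact metric space $(X,d)$ is called expansive with expansivity constant $e>0$ if for any $x\neq y$ in $X$ there exists $n\in\mathbb{Z}$ such that $d(f^n(x),f^n(y))>e$, where for $n<0$, $f^n(x)$ and $f^n(y)$ denote the sets of $|n|$-th preimages and $d$ is taken as the minimum distance between these sets. *)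

theory Defs
  imports "HOL-Analysis.Analysis"
begin

definition zip_space :: "'a set \<Rightarrow> 'a set \<Rightarrow> (int \<Rightarrow> 'a) set" where
  "zip_space Z S = {x. (\<forall>i\<ge>0. x i \<in> S) \<and> (\<forall>i<0. x i \<in> Z)}"

definition zip_M :: "(int \<Rightarrow> 'a) \<Rightarrow> (int \<Rightarrow> 'a) \<Rightarrow> nat" where
  "zip_M x y = (LEAST n. \<exists>i. nat \<bar>i\<bar> = n \<and> x i \<noteq> y i)"

definition zip_dist :: "(int \<Rightarrow> 'a) \<Rightarrow> (int \<Rightarrow> 'a) \<Rightarrow> real" where
  "zip_dist x y = (if x = y then 0 else 2 powr (- real (zip_M x y)))"

definition zip_shift :: "('a \<Rightarrow> 'a) \<Rightarrow> (int \<Rightarrow> 'a) \<Rightarrow> (int \<Rightarrow> 'a)" where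
  "zip_shift \<tau> x = (\<lambda>i. if i = -1 then \<tau> (x 0) else x (i + 1))"

definition local_homeomorphism :: "'a topology \<Rightarrow> ('a \<Rightarrow> 'a) \<Rightarrow> bool" where
  "local_homeomorphism X f \<longleftrightarrow> continuous_map X X f \<and>
     (\<forall>x\<in>topspace X. \<exists>U. openin X U \<and> x \<in> U \<and> openin X (f ` U) \<and>
        homeomorphic_map (subtopology X U) (subtopology X (f ` U)) f)"

text \<open>Expansivity with constant e on the metric space (X,d): for negative times
  the distance is the minimum (infimum) distance between the sets of n-th preimages.\<close>
definition expansive_with :: "'a set \<Rightarrow> ('a \<Rightarrow> 'a \<Rightarrow> real) \<Rightarrow> ('a \<Rightarrow> 'a) \<Rightarrow> real \<Rightarrow> bool" where
  "expansive_with X d f e \<longleftrightarrow> e > 0 \<and>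
     (\<forall>x\<in>X. \<forall>y\<in>X. x \<noteq> y \<longrightarrow>
        (\<exists>n::nat. d ((f ^^ n) x) ((f ^^ n) y) > e) \<or>
        (\<exists>n::nat. n > 0 \<and>
           Inf {d a b | a b. a \<in> X \<and> b \<in> X \<and> (f ^^ n) a = x \<and> (f ^^ n) b = y} > e))"

end

theory Submission
  imports Defs
begin

text \<open>Two sequences are at distance \<open>< 2 powr - m\<close> exactly when they agree on all
  coordinates \<open>|i| \<le> m\<close>. The zip shift moves every window of agreement by one step,
  so it is continuous; on the open cylinder \<open>{y. y 0 = c}\<close> it is inverted by prepending
  \<open>c\<close>, which maps the open cylinder \<open>{z. z (-1) = \<tau> c}\<close> back onto it, so it is a local
  homeomorphism. For expansivity with constant \<open>1/2\<close>: if \<open>x\<close> and \<open>y\<close> differ at a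
  coordinate \<open>i \<ge> 0\<close>, then their \<open>i\<close>-th images differ at coordinate \<open>0\<close>, i.e. are at
  distance \<open>1\<close>; if they differ at \<open>i < 0\<close>, then any \<open>(-i)\<close>-th preimages \<open>a\<close>, \<open>b\<close> satisfy
  \<open>\<tau> (a 0) = x i \<noteq> y i = \<tau> (b 0)\<close>, so again \<open>a 0 \<noteq> b 0\<close>, and such preimages exist
  because \<open>\<tau>\<close> is onto \<open>Z\<close>.\<close>

definition agree_upto :: "nat \<Rightarrow> (int \<Rightarrow> 'a) \<Rightarrow> (int \<Rightarrow> 'a) \<Rightarrow> bool" where
  "agree_upto m x y \<longleftrightarrow> (\<forall>i. nat \<bar>i\<bar> < m \<longrightarrow> x i = y i)"

lemma agree_upto_trans: "agree_upto m x y \<Longrightarrow> agree_upto m y z \<Longrightarrow> agree_upto m x z"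
  unfolding agree_upto_def by auto

lemma agree_upto_iff_le_zip_M:
  assumes "x \<noteq> y"
  shows "agree_upto m x y \<longleftrightarrow> m \<le> zip_M x y"
proof
  assume agree: "agree_upto m x y"
  have "\<exists>n i. nat \<bar>i\<bar> = n \<and> x i \<noteq> y i" using assms by auto
  from LeastI_ex[OF this] obtain i where "nat \<bar>i\<bar> = zip_M x y" "x i \<noteq> y i"
    unfolding zip_M_def by blast
  with agree show "m \<le> zip_M x y" unfolding agree_upto_def by force
next
  assume m: "m \<le> zip_M x y"
  show "agree_upto m x y" unfolding agree_upto_def
  proof (intro allI impI)
    fix i assume "nat \<bar>i\<bar> < m"
    then have "nat \<bar>i\<bar> < zip_M x y" using m by simp
    then show "x i = y i" unfolding zip_M_def using not_less_Least by blast
  qed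
qed

lemma zip_dist_le_iff: "zip_dist x y \<le> 2 powr - real m \<longleftrightarrow> agree_upto m x y"
  by (cases "x = y")
    (simp_all add: zip_dist_def agree_upto_iff_le_zip_M, simp add: agree_upto_def)

lemma zip_dist_less_iff: "zip_dist x y < 2 powr - real m \<longleftrightarrow> agree_upto (Suc m) x y"
  by (cases "x = y")
    (simp_all add: zip_dist_def agree_upto_iff_le_zip_M Suc_le_eq, simp add: agree_upto_def)

lemma zip_dist_eq_1: "x 0 \<noteq> y 0 \<Longrightarrow> zip_dist x y = 1"
  using agree_upto_iff_le_zip_M[of x y 1] by (auto simp: zip_dist_def agree_upto_def)

lemma zip_M_commute: "zip_M x y = zip_M y x"
  unfolding zip_M_def by metis

lemma Metric_space_zip_dist: "Metric_space X zip_dist"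
proof
  fix x y z :: "int \<Rightarrow> 'a"
  show "0 \<le> zip_dist x y" "zip_dist x y = zip_dist y x" "zip_dist x y = 0 \<longleftrightarrow> x = y"
    by (simp_all add: zip_dist_def zip_M_commute)
  show "zip_dist x z \<le> zip_dist x y + zip_dist y z"
  proof (cases "x = y \<or> y = z")
    case True
    then show ?thesis by (auto simp: zip_dist_def)
  next
    case False
    define m where "m = min (zip_M x y) (zip_M y z)"
    have "agree_upto m x y" "agree_upto m y z"
      using False by (auto simp: agree_upto_iff_le_zip_M m_def)
    then have "zip_dist x z \<le> 2 powr - real m"
      using zip_dist_le_iff agree_upto_trans by blast
    also have "\<dots> \<le> zip_dist x y + zip_dist y z"
      using False by (auto simp: zip_dist_def m_def min_def)
    finally show ?thesis .
  qed
qed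

lemma ex_two_powr_neg_less: "(\<epsilon>::real) > 0 \<Longrightarrow> \<exists>m::nat. 2 powr - real m < \<epsilon>"
  using real_arch_pow_inv[of \<epsilon> "1/2"]
  by (simp add: powr_minus powr_realpow power_one_over inverse_eq_divide)

lemma continuous_map_zip_subtopology:
  assumes "A \<subseteq> X" "B \<subseteq> X" "g ` A \<subseteq> B"
    and agree: "\<And>m y y'. y \<in> A \<Longrightarrow> y' \<in> A \<Longrightarrow> agree_upto (Suc m) y y' \<Longrightarrow>
                  agree_upto m (g y) (g y')"
  shows "continuous_map (subtopology (Metric_space.mtopology X zip_dist) A)
           (subtopology (Metric_space.mtopology X zip_dist) B) g"
proof -
  interpret A: Submetric X zip_dist A
    using assms(1) Metric_space_zip_dist by (simp add: Submetric_def Submetric_axioms_def)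
  interpret B: Submetric X zip_dist B
    using assms(2) Metric_space_zip_dist by (simp add: Submetric_def Submetric_axioms_def)
  have "continuous_map (Metric_space.mtopology A zip_dist) (Metric_space.mtopology B zip_dist) g"
  proof (subst A.sub.metric_continuous_map[OF Metric_space_zip_dist], intro conjI ballI allI impI)
    fix a and \<epsilon> :: real assume a: "a \<in> A" and "\<epsilon> > 0"
    then obtain m where m: "2 powr - real m < \<epsilon>" using ex_two_powr_neg_less by blast
    show "\<exists>\<delta>>0. \<forall>y. y \<in> A \<and> zip_dist a y < \<delta> \<longrightarrow> zip_dist (g a) (g y) < \<epsilon>"
    proof (intro exI[of _ "2 powr - real (Suc m)"] conjI allI impI)
      fix y assume "y \<in> A \<and> zip_dist a y < 2 powr - real (Suc m)"
      then have "agree_upto (Suc m) (g a) (g y)"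
        using agree[OF a] zip_dist_less_iff[of a y "Suc m"] by blast
      then show "zip_dist (g a) (g y) < \<epsilon>"
        using m zip_dist_less_iff[of "g a" "g y" m] by simp
    qed simp
  qed fact
  then show ?thesis using A.mtopology_submetric B.mtopology_submetric by simp
qed

lemma openin_zip_cylinder: "openin (Metric_space.mtopology X zip_dist) {z \<in> X. z j = c}"
proof -
  interpret Metric_space X zip_dist by (rule Metric_space_zip_dist)
  define r :: real where "r = 2 powr - real (nat \<bar>j\<bar>)"
  have "mball y r \<subseteq> {z \<in> X. z j = c}" if y: "y \<in> {z \<in> X. z j = c}" for y
  proof
    fix z assume "z \<in> mball y r"
    then have "z \<in> X" "zip_dist y z < r" by auto
    moreover from this(2) have "agree_upto (Suc (nat \<bar>j\<bar>)) y z"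
      unfolding r_def by (simp only: zip_dist_less_iff)
    ultimately show "z \<in> {z \<in> X. z j = c}" using y unfolding agree_upto_def by auto
  qed
  moreover have "r > 0" by (simp add: r_def)
  ultimately show ?thesis unfolding openin_mtopology by blast
qed

lemma zip_shift_in_zip_space:
  "\<tau> ` S \<subseteq> Z \<Longrightarrow> x \<in> zip_space Z S \<Longrightarrow> zip_shift \<tau> x \<in> zip_space Z S"
  by (auto simp: zip_space_def zip_shift_def)

lemma agree_upto_zip_shift:
  "agree_upto (Suc m) x y \<Longrightarrow> agree_upto m (zip_shift \<tau> x) (zip_shift \<tau> y)"
  unfolding agree_upto_def zip_shift_def by auto

definition zip_prepend :: "'a \<Rightarrow> (int \<Rightarrow> 'a) \<Rightarrow> (int \<Rightarrow> 'a)" where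
  "zip_prepend c z = (\<lambda>i. if i = 0 then c else z (i - 1))"

lemma zip_shift_zip_prepend: "z (-1) = \<tau> c \<Longrightarrow> zip_shift \<tau> (zip_prepend c z) = z"
  by (auto simp: zip_shift_def zip_prepend_def)

lemma zip_prepend_zip_shift: "y 0 = c \<Longrightarrow> zip_prepend c (zip_shift \<tau> y) = y"
  by (auto simp: zip_shift_def zip_prepend_def)

lemma agree_upto_zip_prepend:
  "agree_upto (Suc m) z z' \<Longrightarrow> agree_upto m (zip_prepend c z) (zip_prepend c z')"
  unfolding agree_upto_def zip_prepend_def by auto

lemma zip_shift_image_cylinder:
  assumes "\<tau> ` S \<subseteq> Z" "c \<in> S"
  shows "zip_shift \<tau> ` {y \<in> zip_space Z S. y 0 = c} = {z \<in> zip_space Z S. z (-1) = \<tau> c}"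
proof (intro subset_antisym subsetI)
  fix z assume z: "z \<in> {z \<in> zip_space Z S. z (-1) = \<tau> c}"
  then have "zip_prepend c z \<in> {y \<in> zip_space Z S. y 0 = c}"
    using assms(2) by (auto simp: zip_space_def zip_prepend_def)
  then show "z \<in> zip_shift \<tau> ` {y \<in> zip_space Z S. y 0 = c}"
    using z zip_shift_zip_prepend by (metis (mono_tags, lifting) image_eqI mem_Collect_eq)
qed (auto simp: assms(1) zip_shift_in_zip_space, simp add: zip_shift_def)

lemma homeomorphic_map_zip_shift_cylinder:
  assumes "\<tau> ` S \<subseteq> Z" "c \<in> S"
  defines "T \<equiv> Metric_space.mtopology (zip_space Z S) zip_dist"
  shows "homeomorphic_map (subtopology T {y \<in> zip_space Z S. y 0 = c})
           (subtopology T {z \<in> zip_space Z S. z (-1) = \<tau> c}) (zip_shift \<tau>)"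
proof -
  let ?U = "{y \<in> zip_space Z S. y 0 = c}" and ?V = "{z \<in> zip_space Z S. z (-1) = \<tau> c}"
  have image: "zip_shift \<tau> ` ?U = ?V" by (rule zip_shift_image_cylinder[OF assms(1,2)])
  have prepend: "zip_prepend c ` ?V \<subseteq> ?U"
    using assms(2) by (auto simp: zip_space_def zip_prepend_def)
  have subU: "?U \<subseteq> zip_space Z S" and subV: "?V \<subseteq> zip_space Z S" by auto
  have "continuous_map (subtopology T ?U) (subtopology T ?V) (zip_shift \<tau>)"
    unfolding T_def by (rule continuous_map_zip_subtopology[OF subU subV])
      (simp_all add: image agree_upto_zip_shift)
  moreover have "continuous_map (subtopology T ?V) (subtopology T ?U) (zip_prepend c)"
    unfolding T_def by (rule continuous_map_zip_subtopology[OF subV subU])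
      (simp_all add: prepend agree_upto_zip_prepend)
  ultimately have
    "homeomorphic_maps (subtopology T ?U) (subtopology T ?V) (zip_shift \<tau>) (zip_prepend c)"
    unfolding homeomorphic_maps_def
    by (simp add: T_def Metric_space.topspace_mtopology[OF Metric_space_zip_dist]
        zip_shift_zip_prepend zip_prepend_zip_shift)
  then show ?thesis using homeomorphic_map_maps by blast
qed

lemma local_homeomorphism_zip_shift:
  assumes "\<tau> ` S \<subseteq> Z"
  shows "local_homeomorphism (Metric_space.mtopology (zip_space Z S) zip_dist) (zip_shift \<tau>)"
  unfolding local_homeomorphism_def
proof (intro conjI ballI)
  let ?T = "Metric_space.mtopology (zip_space Z S) zip_dist"
  have topspace: "topspace ?T = zip_space Z S"
    by (rule Metric_space.topspace_mtopology[OF Metric_space_zip_dist])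
  have "continuous_map (subtopology ?T (zip_space Z S)) (subtopology ?T (zip_space Z S)) (zip_shift \<tau>)"
    by (rule continuous_map_zip_subtopology)
      (auto simp: zip_shift_in_zip_space[OF assms] agree_upto_zip_shift)
  moreover have "subtopology ?T (zip_space Z S) = ?T"
    using subtopology_topspace[of ?T] by (simp only: topspace)
  ultimately show "continuous_map ?T ?T (zip_shift \<tau>)" by simp
  fix x assume "x \<in> topspace ?T"
  then have x: "x \<in> zip_space Z S" by (simp only: topspace)
  then have x0: "x 0 \<in> S" by (simp add: zip_space_def)
  let ?U = "{y \<in> zip_space Z S. y 0 = x 0}"
  have image: "zip_shift \<tau> ` ?U = {z \<in> zip_space Z S. z (-1) = \<tau> (x 0)}"
    by (rule zip_shift_image_cylinder[OF assms x0])
  show "\<exists>U. openin ?T U \<and> x \<in> U \<and> openin ?T (zip_shift \<tau> ` U) \<and>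
      homeomorphic_map (subtopology ?T U) (subtopology ?T (zip_shift \<tau> ` U)) (zip_shift \<tau>)"
  proof (intro exI[of _ ?U] conjI)
    show "openin ?T ?U" by (rule openin_zip_cylinder)
    show "x \<in> ?U" using x by simp
    show "openin ?T (zip_shift \<tau> ` ?U)" unfolding image by (rule openin_zip_cylinder)
    show "homeomorphic_map (subtopology ?T ?U) (subtopology ?T (zip_shift \<tau> ` ?U)) (zip_shift \<tau>)"
      unfolding image by (rule homeomorphic_map_zip_shift_cylinder[OF assms x0])
  qed
qed

lemma funpow_zip_shift:
  "(zip_shift \<tau> ^^ n) x j =
     (if - int n \<le> j \<and> j < 0 then \<tau> (x (j + int n)) else x (j + int n))"
proof (induction n arbitrary: j)
  case 0
  then show ?case by auto
next
  case (Suc n)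
  have "(zip_shift \<tau> ^^ Suc n) x j =
      (if j = -1 then \<tau> ((zip_shift \<tau> ^^ n) x 0) else (zip_shift \<tau> ^^ n) x (j + 1))"
    by (simp add: zip_shift_def)
  then show ?case using Suc.IH by (simp add: algebra_simps)
qed

lemma funpow_zip_shift_surj:
  assumes "Z \<subseteq> \<tau> ` S" "w \<in> zip_space Z S"
  obtains a where "a \<in> zip_space Z S" "(zip_shift \<tau> ^^ n) a = w"
proof
  let ?s = "inv_into S \<tau>"
  have s: "?s z \<in> S" "\<tau> (?s z) = z" if "z \<in> Z" for z
    using that assms(1) by (auto intro: inv_into_into f_inv_into_f)
  have w: "\<And>k. k \<ge> 0 \<Longrightarrow> w k \<in> S" "\<And>k. k < 0 \<Longrightarrow> w k \<in> Z"
    using assms(2) by (auto simp: zip_space_def)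
  define a where "a k = (if 0 \<le> k \<and> k < int n then ?s (w (k - int n)) else w (k - int n))" for k
  show "a \<in> zip_space Z S" unfolding zip_space_def a_def using w s by auto
  show "(zip_shift \<tau> ^^ n) a = w"
    by (rule ext) (auto simp: funpow_zip_shift a_def s w)
qed

lemma zip_dist_funpow_zip_shift_eq_1:
  assumes "0 \<le> i" "x i \<noteq> y i"
  shows "zip_dist ((zip_shift \<tau> ^^ nat i) x) ((zip_shift \<tau> ^^ nat i) y) = 1"
  using assms by (intro zip_dist_eq_1) (simp add: funpow_zip_shift)

lemma zip_dist_preimages_eq_1:
  assumes "i < 0" "x i \<noteq> y i"
    and "(zip_shift \<tau> ^^ nat (- i)) a = x" "(zip_shift \<tau> ^^ nat (- i)) b = y"
  shows "zip_dist a b = 1"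
proof (rule zip_dist_eq_1)
  have "x i = \<tau> (a 0)" "y i = \<tau> (b 0)"
    using assms by (auto simp: funpow_zip_shift)
  with assms(2) show "a 0 \<noteq> b 0" by auto
qed

lemma expansive_zip_shift:
  assumes "Z \<subseteq> \<tau> ` S"
  shows "expansive_with (zip_space Z S) zip_dist (zip_shift \<tau>) (1/2)"
  unfolding expansive_with_def
proof (intro conjI ballI impI)
  let ?X = "zip_space Z S" and ?f = "zip_shift \<tau>"
  fix x y assume x: "x \<in> ?X" and y: "y \<in> ?X" and "x \<noteq> y"
  then obtain i where i: "x i \<noteq> y i" by blast
  show "(\<exists>n. 1/2 < zip_dist ((?f ^^ n) x) ((?f ^^ n) y)) \<or>
     (\<exists>n>0. 1/2 < Inf {zip_dist a b |a b. a \<in> ?X \<and> b \<in> ?X \<and> (?f ^^ n) a = x \<and> (?f ^^ n) b = y})"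
  proof (cases "0 \<le> i")
    case True
    with i have "zip_dist ((?f ^^ nat i) x) ((?f ^^ nat i) y) = 1"
      by (intro zip_dist_funpow_zip_shift_eq_1)
    then show ?thesis by (intro disjI1 exI[of _ "nat i"]) simp
  next
    case False
    let ?n = "nat (- i)"
    \<comment> \<open>Without preimages the infimum below would be the unspecified \<open>Inf {}\<close>.\<close>
    obtain a b where "a \<in> ?X" "b \<in> ?X" "(?f ^^ ?n) a = x" "(?f ^^ ?n) b = y"
      using funpow_zip_shift_surj[OF assms] x y by metis
    then have "{zip_dist a b |a b. a \<in> ?X \<and> b \<in> ?X \<and> (?f ^^ ?n) a = x \<and> (?f ^^ ?n) b = y} = {1}"
      using zip_dist_preimages_eq_1[of i x y] False i by fastforce
    then show ?thesis using False by (intro disjI2 exI[of _ ?n]) simp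
  qed
qed simp

theorem proposition1:
  fixes S Z :: "'a set" and \<tau> :: "'a \<Rightarrow> 'a"
  assumes "finite S" "S \<noteq> {}" "finite Z" "Z \<noteq> {}"
    and "card Z \<le> card S"
    and "\<tau> ` S = Z"
  shows "local_homeomorphism (Metric_space.mtopology (zip_space Z S) zip_dist) (zip_shift \<tau>)
       \<and> (\<exists>e. expansive_with (zip_space Z S) zip_dist (zip_shift \<tau>) e)"
  using local_homeomorphism_zip_shift[of \<tau> S Z] expansive_zip_shift[of Z \<tau> S] assms(6) by auto

end
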